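(* Let \(\mathcal{I}\) be an instance of 3-SAT and let \(G(\mathcal{I})\) and \(T(\mathcal{I})\) be the graph and spanning tree constructed below. If \(\mathcal{I}\) does not admit a satisfying assignment, then \(T(\mathcal{I})\) is not the \(\mathcal{F}\)-tree of any LBFS ordering of \(G(\mathcal{I})\).
   Context: Let \(\mathcal{I}\) have variables \(x_1,\dots,x_k\) and clauses \(C_1,\dots,C_l\), each a disjunction of three literals. \(G(\mathcal{I})\) has vertices: literal vertices \(X=\{x_1,\dots,x_k,\overline{x_1},\dots,\overline{x_k}\}\); for each clause \(C_i\) three vertices \(a_i,c_i,t_i\); and four vertices \(r,p,q,u\). Edges: any two vertices of \(X\) are adjacent except the pairs \(x_j\overline{x_j}\); each \(\{a_i,c_i,t_i\}\) is a triangle; \(c_i\) is adjacent to the literal vertices of the literals occurring in \(C_i\); \(r\) is adjacent to every vertex except \(u\) and the \(t_i\); \(u\) is adjacent to every vertex except \(r\) and the \(t_i\); \(p\) is adjacent to every vertex of \(X\) and to \(q\); \(q\) is adjacent to every vertex of \(X\) and to every \(a_i\); there are no other edges. \(T(\mathcal{I})\) is the spanning tree consisting of all edges of \(G(\mathcal{I})\) incident to \(r\), the edge \(up\), and the edges \(c_it_i\) for \(i=1,\dots,l\). An LBFS ordering (with \(n\) the number of vertices) is produced by starting with label \((n)\) on a start vertex, empty labels elsewhere, and for \(j=1,\dots,n\) picking an unnumbered vertex of lexicographically largest label as \(v_j\) and appending \(n-j\) to the labels of its unnumbered neighbors (ties arbitrary). The \(\mathcal{F}\)-tree of an ordering \((v_1,\dots,v_n)\)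 has, for each \(v\ne v_1\), an edge from \(v\) to its leftmost neighbor in the ordering. *)

theory Defs
  imports Main
begin

text \<open>A 3-SAT instance: variables are indexed 0..<k; a literal is a pair (j, b)
  meaning x_j if b = True and the negation of x_j if b = False; an instance is a
  list of clauses, each a list of exactly three literals over variables < k.\<close>

type_synonym literal = "nat \<times> bool"

definition wf_instance :: "nat \<Rightarrow> literal list list \<Rightarrow> bool" where
  "wf_instance k cls \<longleftrightarrow> (\<forall>c \<in> set cls. length c = 3 \<and> (\<forall>(j, b) \<in> set c. j < k))"

definition satisfiable :: "nat \<Rightarrow> literal list list \<Rightarrow> bool" where
  "satisfiable k cls \<longleftrightarrow> (\<exists>\<alpha> :: nat \<Rightarrow> bool. \<forall>c \<in> set cls. \<exists>(j, b) \<in> set c. \<alpha> j = b)"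

datatype vert = Lit nat bool | A nat | C nat | T nat | R | P | Q | U

definition Xset :: "nat \<Rightarrow> vert set" where
  "Xset k = {Lit j b | j b. j < k}"

definition verts :: "nat \<Rightarrow> literal list list \<Rightarrow> vert set" where
  "verts k cls = Xset k \<union> {A i | i. i < length cls} \<union> {C i | i. i < length cls}
     \<union> {T i | i. i < length cls} \<union> {R, P, Q, U}"

definition base_edge :: "nat \<Rightarrow> literal list list \<Rightarrow> vert \<Rightarrow> vert \<Rightarrow> bool" where
  "base_edge k cls x y \<longleftrightarrow>
     (\<exists>j b j' b'. x = Lit j b \<and> y = Lit j' b' \<and> j < k \<and> j' < k \<and> j \<noteq> j')
   \<or> (\<exists>i < length cls. (x = A i \<and> y = C i) \<or> (x = C i \<and> y = T i) \<or> (x = A i \<and> y = T i))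
   \<or> (\<exists>i < length cls. \<exists>j b. x = C i \<and> y = Lit j b \<and> (j, b) \<in> set (cls ! i))
   \<or> (x = R \<and> y \<in> verts k cls \<and> y \<noteq> R \<and> y \<noteq> U \<and> (\<forall>i. y \<noteq> T i))
   \<or> (x = U \<and> y \<in> verts k cls \<and> y \<noteq> U \<and> y \<noteq> R \<and> (\<forall>i. y \<noteq> T i))
   \<or> (x = P \<and> (y \<in> Xset k \<or> y = Q))
   \<or> (x = Q \<and> (y \<in> Xset k \<or> (\<exists>i < length cls. y = A i)))"

definition adjG :: "nat \<Rightarrow> literal list list \<Rightarrow> vert \<Rightarrow> vert \<Rightarrow> bool" where
  "adjG k cls x y \<longleftrightarrow> x \<noteq> y \<and> (base_edge k cls x y \<or> base_edge k cls y x)"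

definition treeT :: "nat \<Rightarrow> literal list list \<Rightarrow> vert set set" where
  "treeT k cls = {{R, x} | x. adjG k cls R x} \<union> {{U, P}} \<union> {{C i, T i} | i. i < length cls}"

text \<open>Strict lexicographic order on labels (a proper prefix is smaller).\<close>
definition lex_less :: "nat list \<Rightarrow> nat list \<Rightarrow> bool" where
  "lex_less xs ys \<longleftrightarrow> (xs, ys) \<in> lexord {(a, b). a < b}"

text \<open>Label of vertex w at the beginning of step j (1-based) of LBFS with start
  vertex s, when the vertices chosen so far are v_1..v_{j-1} = sigma!0..sigma!(j-2),
  n being the number of vertices.\<close>
definition lbfs_label ::
  "('v \<Rightarrow> 'v \<Rightarrow> bool) \<Rightarrow> nat \<Rightarrow> 'v \<Rightarrow> 'v list \<Rightarrow> nat \<Rightarrow> 'v \<Rightarrow> nat list" where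
  "lbfs_label adj n s \<sigma> j w =
     (if w = s then [n] else []) @ map (\<lambda>i. n - i) (filter (\<lambda>i. adj (\<sigma> ! (i - 1)) w) [1..<j])"

text \<open>sigma (with v_j = sigma!(j-1)) is an ordering of V that can be produced by LBFS
  started at s: at each step j the chosen vertex has a lexicographically largest label
  among the unnumbered vertices.\<close>
definition is_lbfs :: "('v \<Rightarrow> 'v \<Rightarrow> bool) \<Rightarrow> 'v set \<Rightarrow> 'v \<Rightarrow> 'v list \<Rightarrow> bool" where
  "is_lbfs adj V s \<sigma> \<longleftrightarrow> distinct \<sigma> \<and> set \<sigma> = V \<and> s \<in> V \<and>
     (\<forall>j \<in> {1..length \<sigma>}. \<forall>w \<in> V - set (take (j - 1) \<sigma>).
        \<not> lex_less (lbfs_label adj (length \<sigma>) s \<sigma> j (\<sigma> ! (j - 1)))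
                    (lbfs_label adj (length \<sigma>) s \<sigma> j w))"

definition leftmost_nbr :: "('v \<Rightarrow> 'v \<Rightarrow> bool) \<Rightarrow> 'v list \<Rightarrow> 'v \<Rightarrow> 'v" where
  "leftmost_nbr adj \<sigma> v = \<sigma> ! (LEAST i. i < length \<sigma> \<and> adj (\<sigma> ! i) v)"

definition F_tree :: "('v \<Rightarrow> 'v \<Rightarrow> bool) \<Rightarrow> 'v list \<Rightarrow> 'v set set" where
  "F_tree adj \<sigma> = {{v, leftmost_nbr adj \<sigma> v} | v. v \<in> set \<sigma> \<and> v \<noteq> \<sigma> ! 0}"

end

theory Submission
  imports Defs
begin

text \<open>Every neighbour of the first
  vertex is attached to it in the F-tree, which forces v_1 = r; as the tree edge of u goes to p
  and v_2 is a neighbour of r, hence of u, also v_2 = p. Now the four-point property of LBFS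
  (if a < b < c, ac is an edge and ab is not, then some vertex before a distinguishes b from c)
  does the rest: p sees q but no a_i, c_i, so q precedes all a_i and c_i, and no two
  complementary literals both precede q. The tree edge c_i t_i puts c_i before a_i; since q sees
  a_i but not c_i, some vertex before q distinguishes them, and only a literal of C_i can.
  Hence making x_j true iff x_j precedes q satisfies every clause.\<close>

definition precedes :: "'v list \<Rightarrow> 'v \<Rightarrow> 'v \<Rightarrow> bool" where
  "precedes \<sigma> x y \<longleftrightarrow> (\<exists>i j. i < j \<and> j < length \<sigma> \<and> \<sigma> ! i = x \<and> \<sigma> ! j = y)"

lemma precedes_in_set: "precedes \<sigma> x y \<Longrightarrow> x \<in> set \<sigma> \<and> y \<in> set \<sigma>"
  unfolding precedes_def by auto

lemma precedes_total:
  assumes "x \<in> set \<sigma>" "y \<in> set \<sigma>" "x \<noteq> y"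
  shows "precedes \<sigma> x y \<or> precedes \<sigma> y x"
proof -
  obtain i j where "i < length \<sigma>" "j < length \<sigma>" "\<sigma> ! i = x" "\<sigma> ! j = y"
    using assms(1,2) by (auto simp: in_set_conv_nth)
  with assms(3) show ?thesis
    unfolding precedes_def by (metis linorder_neqE_nat)
qed

lemma precedes_irrefl: "distinct \<sigma> \<Longrightarrow> \<not> precedes \<sigma> x x"
  unfolding precedes_def by (auto simp: nth_eq_iff_index_eq)

lemma precedes_trans:
  assumes "distinct \<sigma>" "precedes \<sigma> x y" "precedes \<sigma> y z"
  shows "precedes \<sigma> x z"
  using assms unfolding precedes_def
  by (metis nth_eq_iff_index_eq order.strict_trans)

lemma precedes_asym: "distinct \<sigma> \<Longrightarrow> precedes \<sigma> x y \<Longrightarrow> \<not> precedes \<sigma> y x"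
  using precedes_irrefl precedes_trans by metis

lemma hd_precedes: "x \<in> set \<sigma> \<Longrightarrow> x \<noteq> \<sigma> ! 0 \<Longrightarrow> precedes \<sigma> (\<sigma> ! 0) x"
  unfolding precedes_def by (metis gr0I in_set_conv_nth)

lemma precedes_second: "distinct \<sigma> \<Longrightarrow> precedes \<sigma> x (\<sigma> ! 1) \<Longrightarrow> x = \<sigma> ! 0"
  unfolding precedes_def by (auto simp: nth_eq_iff_index_eq)

lemma second_precedes:
  "x \<in> set \<sigma> \<Longrightarrow> x \<noteq> \<sigma> ! 0 \<Longrightarrow> x \<noteq> \<sigma> ! 1 \<Longrightarrow> precedes \<sigma> (\<sigma> ! 1) x"
  unfolding precedes_def in_set_conv_nth
  by (metis One_nat_def less_one linorder_neqE_nat)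

lemma leftmost_nbr_hd: "\<sigma> \<noteq> [] \<Longrightarrow> adj (\<sigma> ! 0) x \<Longrightarrow> leftmost_nbr adj \<sigma> x = \<sigma> ! 0"
  unfolding leftmost_nbr_def by (subst Least_eq_0) auto

lemma leftmost_nbr_precedes:
  assumes "y \<in> set \<sigma>" "adj y x"
  shows "leftmost_nbr adj \<sigma> x = y \<or> precedes \<sigma> (leftmost_nbr adj \<sigma> x) y"
proof -
  obtain i where i: "i < length \<sigma>" "\<sigma> ! i = y"
    using assms(1) by (auto simp: in_set_conv_nth)
  define l where "l = (LEAST l. l < length \<sigma> \<and> adj (\<sigma> ! l) x)"
  have "l \<le> i"
    unfolding l_def using i assms(2) by (auto intro: Least_le)
  then have "l = i \<or> l < i" by linarith
  then show ?thesis
    unfolding leftmost_nbr_def l_def[symmetric] precedes_def using i by auto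
qed

lemma lbfs_hd:
  assumes "is_lbfs adj V s \<sigma>"
  shows "\<sigma> ! 0 = s"
proof (rule ccontr)
  assume "\<sigma> ! 0 \<noteq> s"
  then have "lex_less (lbfs_label adj (length \<sigma>) s \<sigma> 1 (\<sigma> ! 0)) (lbfs_label adj (length \<sigma>) s \<sigma> 1 s)"
    by (simp add: lbfs_label_def lex_less_def)
  moreover have "1 \<in> {1..length \<sigma>}"
    using assms by (cases \<sigma>) (auto simp: is_lbfs_def)
  ultimately show False
    using assms unfolding is_lbfs_def by fastforce
qed

lemma lbfs_label_lex_less:
  assumes "v \<noteq> s" "w \<noteq> s" "d < p" "p < n"
    and "adj (\<sigma> ! d) v" "\<not> adj (\<sigma> ! d) w"
    and agree: "\<forall>t<d. adj (\<sigma> ! t) v = adj (\<sigma> ! t) w"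
  shows "lex_less (lbfs_label adj n s \<sigma> (Suc p) w) (lbfs_label adj n s \<sigma> (Suc p) v)"
proof -
  have split: "[1..<Suc p] = [1..<Suc d] @ Suc d # [Suc (Suc d)..<Suc p]"
    using \<open>d < p\<close> upt_add_eq_append[of 1 "Suc d" "p - d"] by (simp add: upt_conv_Cons)
  define later where "later x = filter (\<lambda>i. adj (\<sigma> ! (i - 1)) x) [Suc (Suc d)..<Suc p]" for x
  define common where "common = map (\<lambda>i. n - i) (filter (\<lambda>i. adj (\<sigma> ! (i - 1)) v) [1..<Suc d])"
  have "filter (\<lambda>i. adj (\<sigma> ! (i - 1)) w) [1..<Suc d] = filter (\<lambda>i. adj (\<sigma> ! (i - 1)) v) [1..<Suc d]"
    using agree by (intro filter_cong) auto
  then have label_w: "lbfs_label adj n s \<sigma> (Suc p) w = common @ map (\<lambda>i. n - i) (later w)"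
    using assms(2,6) unfolding lbfs_label_def later_def common_def split by simp
  have label_v: "lbfs_label adj n s \<sigma> (Suc p) v = common @ (n - Suc d) # map (\<lambda>i. n - i) (later v)"
    using assms(1,5) unfolding lbfs_label_def later_def common_def split by simp
  have "(map (\<lambda>i. n - i) (later w), (n - Suc d) # map (\<lambda>i. n - i) (later v)) \<in> lexord {(a, b). a < b}"
  proof (cases "later w")
    case (Cons i rest)
    then have "i \<in> set (later w)"
      by simp
    then have "Suc d < i" "i \<le> p"
      unfolding later_def by auto
    with \<open>p < n\<close> have "n - i < n - Suc d"
      by linarith
    with Cons show ?thesis by simp
  qed simp
  then show ?thesis
    unfolding lex_less_def label_w label_v by (rule lexord_append_leftI)
qed

lemma lbfs_four_point_nth:
  assumes lbfs: "is_lbfs adj V s \<sigma>"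
    and "d < p" "p < q" "q < length \<sigma>"
    and "adj (\<sigma> ! d) (\<sigma> ! q)" "\<not> adj (\<sigma> ! d) (\<sigma> ! p)"
  shows "\<exists>t<d. adj (\<sigma> ! t) (\<sigma> ! q) \<noteq> adj (\<sigma> ! t) (\<sigma> ! p)"
proof (rule ccontr)
  assume "\<not> ?thesis"
  have dist: "distinct \<sigma>" and V: "set \<sigma> = V"
    using lbfs by (auto simp: is_lbfs_def)
  have "\<sigma> \<noteq> []"
    using assms(4) by auto
  then have "\<sigma> ! q \<noteq> \<sigma> ! 0" "\<sigma> ! p \<noteq> \<sigma> ! 0"
    using nth_eq_iff_index_eq[OF dist, of _ 0] assms(2-4) by simp_all
  then have "\<sigma> ! q \<noteq> s" "\<sigma> ! p \<noteq> s"
    unfolding lbfs_hd[OF lbfs] .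
  with assms(2-6) \<open>\<not> ?thesis\<close> have
    "lex_less (lbfs_label adj (length \<sigma>) s \<sigma> (Suc p) (\<sigma> ! p))
              (lbfs_label adj (length \<sigma>) s \<sigma> (Suc p) (\<sigma> ! q))"
    by (intro lbfs_label_lex_less) auto
  moreover have "\<sigma> ! q \<in> V - set (take p \<sigma>)"
    using dist V assms(3,4) by (auto simp: in_set_conv_nth nth_eq_iff_index_eq)
  moreover have "Suc p \<in> {1..length \<sigma>}"
    using assms(3,4) by simp
  ultimately show False
    using lbfs unfolding is_lbfs_def by fastforce
qed

lemma lbfs_four_point:
  assumes lbfs: "is_lbfs adj V s \<sigma>"
    and "precedes \<sigma> x y" "precedes \<sigma> y z" "adj x z" "\<not> adj x y"
  shows "\<exists>t. precedes \<sigma> t x \<and> adj t z \<noteq> adj t y"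
proof -
  have dist: "distinct \<sigma>"
    using lbfs by (simp add: is_lbfs_def)
  obtain d p q where "d < p" "p < q" "q < length \<sigma>" "\<sigma> ! d = x" "\<sigma> ! p = y" "\<sigma> ! q = z"
    using assms(2,3) dist unfolding precedes_def by (metis nth_eq_iff_index_eq order.strict_trans)
  moreover from this lbfs_four_point_nth[OF lbfs] assms(4,5) obtain t
    where "t < d" "adj (\<sigma> ! t) z \<noteq> adj (\<sigma> ! t) y"
    by blast
  ultimately have "precedes \<sigma> (\<sigma> ! t) x \<and> adj (\<sigma> ! t) z \<noteq> adj (\<sigma> ! t) y"
    unfolding precedes_def by (metis order.strict_trans)
  then show ?thesis ..
qed

lemma lbfs_adj_hd_second:
  assumes lbfs: "is_lbfs adj V s \<sigma>" and "w \<in> V" "w \<noteq> \<sigma> ! 0" "adj (\<sigma> ! 0) w"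
  shows "adj (\<sigma> ! 0) (\<sigma> ! 1)"
proof -
  obtain q where q: "q < length \<sigma>" "\<sigma> ! q = w"
    using lbfs assms(2) by (auto simp: is_lbfs_def in_set_conv_nth)
  show ?thesis
  proof (cases "q = 1")
    case False
    with q assms(3) have "1 < q"
      by (metis less_one linorder_neqE_nat)
    then show ?thesis
      using lbfs_four_point_nth[OF lbfs, of 0 1 q] q assms(4) by auto
  qed (use q assms(4) in simp)
qed

lemma treeT_edge_U: "{U, y} \<in> treeT k cls \<Longrightarrow> y = P"
  unfolding treeT_def adjG_def base_edge_def by (auto simp: doubleton_eq_iff)

lemma treeT_edge_T: "{T i, y} \<in> treeT k cls \<Longrightarrow> y = C i"
  unfolding treeT_def adjG_def base_edge_def by (auto simp: doubleton_eq_iff)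

lemma eq_R_if_all_edges_in_treeT:
  assumes x: "x \<in> verts k cls"
    and edges: "\<forall>w \<in> verts k cls. adjG k cls x w \<longrightarrow> {w, x} \<in> treeT k cls"
  shows "x = R"
proof (cases x)
  case (T i)
  with x have "A i \<in> verts k cls" "adjG k cls x (A i)"
    by (auto simp: verts_def Xset_def adjG_def base_edge_def)
  with edges T show ?thesis
    by (auto simp: treeT_def adjG_def base_edge_def doubleton_eq_iff)
next
  case P
  with edges show ?thesis
    by (auto simp: verts_def treeT_def adjG_def base_edge_def doubleton_eq_iff)
next
  case U
  with edges show ?thesis
    by (auto simp: verts_def treeT_def adjG_def base_edge_def doubleton_eq_iff)
qed (use x edges treeT_edge_U in \<open>fastforce simp: verts_def adjG_def base_edge_def\<close>)+

lemma adjG_R_imp_adjG_U: "adjG k cls R y \<Longrightarrow> adjG k cls y U"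
  unfolding adjG_def base_edge_def by (auto simp: verts_def)

lemma adjG_Q_eq_adjG_Lit:
  assumes "z \<in> verts k cls" "j < k" "z \<noteq> Q" "\<forall>i. z \<noteq> A i \<and> z \<noteq> C i" "\<forall>b'. z \<noteq> Lit j b'"
  shows "adjG k cls z Q = adjG k cls z (Lit j b)"
  using assms unfolding adjG_def base_edge_def verts_def Xset_def by auto

lemma adjG_A_eq_adjG_C:
  assumes "z \<in> verts k cls" "i < length cls" "z \<noteq> Q" "\<forall>i'. z \<noteq> A i' \<and> z \<noteq> C i'"
    "\<forall>(j, b) \<in> set (cls ! i). z \<noteq> Lit j b"
  shows "adjG k cls z (A i) = adjG k cls z (C i)"
  using assms unfolding adjG_def base_edge_def verts_def Xset_def by auto

locale lbfs_F_tree =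
  fixes k :: nat and cls :: "literal list list" and s :: vert and \<sigma> :: "vert list"
  assumes lbfs: "is_lbfs (adjG k cls) (verts k cls) s \<sigma>"
    and F_tree_eq: "F_tree (adjG k cls) \<sigma> = treeT k cls"
begin

lemma distinct_\<sigma>: "distinct \<sigma>"
  and set_\<sigma>: "set \<sigma> = verts k cls"
  using lbfs by (simp_all add: is_lbfs_def)

lemma treeT_leftmost_nbr:
  "v \<in> verts k cls \<Longrightarrow> v \<noteq> \<sigma> ! 0 \<Longrightarrow> {v, leftmost_nbr (adjG k cls) \<sigma> v} \<in> treeT k cls"
  using F_tree_eq set_\<sigma> unfolding F_tree_def by blast

lemma special_vertices_mem: "R \<in> set \<sigma>" "P \<in> set \<sigma>" "Q \<in> set \<sigma>" "U \<in> set \<sigma>"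
  by (simp_all add: set_\<sigma> verts_def)

lemma hd_eq_R: "\<sigma> ! 0 = R"
proof (rule eq_R_if_all_edges_in_treeT)
  have "\<sigma> \<noteq> []"
    using special_vertices_mem by auto
  then show "\<sigma> ! 0 \<in> verts k cls"
    using set_\<sigma> nth_mem by blast
  show "\<forall>w \<in> verts k cls. adjG k cls (\<sigma> ! 0) w \<longrightarrow> {w, \<sigma> ! 0} \<in> treeT k cls"
  proof (intro ballI impI)
    fix w assume "w \<in> verts k cls" "adjG k cls (\<sigma> ! 0) w"
    moreover from this have "w \<noteq> \<sigma> ! 0"
      unfolding adjG_def by auto
    ultimately show "{w, \<sigma> ! 0} \<in> treeT k cls"
      using treeT_leftmost_nbr[of w] leftmost_nbr_hd[OF \<open>\<sigma> \<noteq> []\<close>, of "adjG k cls" w] by simp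
  qed
qed

lemma second_eq_P: "\<sigma> ! 1 = P"
proof -
  have "adjG k cls R P"
    by (simp add: adjG_def base_edge_def verts_def)
  then have "adjG k cls R (\<sigma> ! 1)"
    using lbfs_adj_hd_second[OF lbfs, of P] special_vertices_mem set_\<sigma> hd_eq_R by simp
  then have "adjG k cls (\<sigma> ! 1) U"
    by (rule adjG_R_imp_adjG_U)
  moreover have "1 < length \<sigma>"
    using hd_precedes[OF special_vertices_mem(2)] hd_eq_R unfolding precedes_def by auto
  ultimately have "leftmost_nbr (adjG k cls) \<sigma> U = \<sigma> ! 1 \<or>
      precedes \<sigma> (leftmost_nbr (adjG k cls) \<sigma> U) (\<sigma> ! 1)"
    by (intro leftmost_nbr_precedes) auto
  moreover have "leftmost_nbr (adjG k cls) \<sigma> U = P"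
    using treeT_edge_U treeT_leftmost_nbr[of U] special_vertices_mem set_\<sigma> hd_eq_R by simp
  ultimately show ?thesis
    using precedes_second[OF distinct_\<sigma>, of P] hd_eq_R by auto
qed

lemma Q_precedes_A_C:
  assumes x: "x \<in> set \<sigma>" "x = A i \<or> x = C i"
  shows "precedes \<sigma> Q x"
proof (rule ccontr)
  assume "\<not> precedes \<sigma> Q x"
  then have "precedes \<sigma> x Q"
    using precedes_total[OF x(1) special_vertices_mem(3)] x(2) by auto
  moreover have "precedes \<sigma> P x"
    using second_precedes[OF x(1)] x(2) hd_eq_R second_eq_P by auto
  moreover have "adjG k cls P Q" "\<not> adjG k cls P x"
    using x(2) by (auto simp: adjG_def base_edge_def Xset_def)
  ultimately obtain t where "precedes \<sigma> t P" "adjG k cls t Q \<noteq> adjG k cls t x"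
    using lbfs_four_point[OF lbfs] by blast
  moreover from this have "t = R"
    using precedes_second[OF distinct_\<sigma>, of t] hd_eq_R second_eq_P by metis
  moreover have "x \<in> verts k cls" "Q \<in> verts k cls"
    using x(1) special_vertices_mem(3) set_\<sigma> by simp_all
  ultimately show False
    using x(2) by (auto simp: adjG_def base_edge_def)
qed

lemma precedes_QD:
  assumes "precedes \<sigma> t Q"
  shows "t \<in> verts k cls" "t \<noteq> Q" "\<forall>i. t \<noteq> A i \<and> t \<noteq> C i"
proof -
  show "t \<in> verts k cls"
    using precedes_in_set[OF assms] set_\<sigma> by simp
  show "t \<noteq> Q"
    using precedes_irrefl[OF distinct_\<sigma>] assms by blast
  show "\<forall>i. t \<noteq> A i \<and> t \<noteq> C i"
    using Q_precedes_A_C precedes_asym[OF distinct_\<sigma> assms] precedes_in_set[OF assms] by blast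
qed

lemma complement_not_precedes_Q:
  assumes earlier: "precedes \<sigma> (Lit j b) (Lit j (\<not> b))"
  shows "\<not> precedes \<sigma> (Lit j (\<not> b)) Q"
proof
  assume later: "precedes \<sigma> (Lit j (\<not> b)) Q"
  have "Lit j b \<in> verts k cls"
    using precedes_in_set[OF earlier] set_\<sigma> by simp
  then have "j < k"
    by (simp add: verts_def Xset_def)
  then have "adjG k cls (Lit j b) Q" "\<not> adjG k cls (Lit j b) (Lit j (\<not> b))"
    by (auto simp: adjG_def base_edge_def Xset_def)
  then obtain t where t: "precedes \<sigma> t (Lit j b)" "adjG k cls t Q \<noteq> adjG k cls t (Lit j (\<not> b))"
    using lbfs_four_point[OF lbfs earlier later] by blast
  have before_Q: "precedes \<sigma> t Q"
    using precedes_trans[OF distinct_\<sigma> precedes_trans[OF distinct_\<sigma> t(1) earlier] later] .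
  have not_lit: "\<forall>b'. t \<noteq> Lit j b'"
  proof (intro allI notI)
    fix b' assume "t = Lit j b'"
    with t(1) earlier show False
      using precedes_irrefl[OF distinct_\<sigma>] precedes_asym[OF distinct_\<sigma>] by (cases "b' = b") auto
  qed
  have "adjG k cls t Q = adjG k cls t (Lit j (\<not> b))"
    using precedes_QD[OF before_Q] \<open>j < k\<close> not_lit by (intro adjG_Q_eq_adjG_Lit)
  with t(2) show False ..
qed

lemma not_both_literals_precede_Q:
  "\<not> (precedes \<sigma> (Lit j True) Q \<and> precedes \<sigma> (Lit j False) Q)"
proof
  assume "precedes \<sigma> (Lit j True) Q \<and> precedes \<sigma> (Lit j False) Q"
  then have true_before_Q: "precedes \<sigma> (Lit j True) Q" and false_before_Q: "precedes \<sigma> (Lit j False) Q"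
    by simp_all
  have "precedes \<sigma> (Lit j True) (Lit j False) \<or> precedes \<sigma> (Lit j False) (Lit j True)"
    using precedes_total[of "Lit j True" \<sigma> "Lit j False"]
      precedes_in_set[OF true_before_Q] precedes_in_set[OF false_before_Q] by simp
  then show False
    using complement_not_precedes_Q[of j True] complement_not_precedes_Q[of j False]
      true_before_Q false_before_Q by auto
qed

lemma clause_literal_precedes_Q:
  assumes i: "i < length cls"
  shows "\<exists>(j, b) \<in> set (cls ! i). precedes \<sigma> (Lit j b) Q"
proof -
  have mem: "A i \<in> set \<sigma>" "C i \<in> set \<sigma>" "T i \<in> set \<sigma>"
    using i set_\<sigma> by (simp_all add: verts_def)
  have "leftmost_nbr (adjG k cls) \<sigma> (T i) = C i"
    using treeT_edge_T treeT_leftmost_nbr[of "T i"] mem(3) set_\<sigma> hd_eq_R by simp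
  moreover have "adjG k cls (A i) (T i)"
    using i by (simp add: adjG_def base_edge_def)
  ultimately have "precedes \<sigma> (C i) (A i)"
    using leftmost_nbr_precedes[OF mem(1), of "adjG k cls" "T i"] by auto
  moreover have "precedes \<sigma> Q (C i)"
    using Q_precedes_A_C mem(2) by blast
  moreover have "adjG k cls Q (A i)" "\<not> adjG k cls Q (C i)"
    using i by (auto simp: adjG_def base_edge_def Xset_def)
  ultimately obtain t where t: "precedes \<sigma> t Q" "adjG k cls t (A i) \<noteq> adjG k cls t (C i)"
    using lbfs_four_point[OF lbfs] by blast
  have "\<not> (\<forall>(j, b) \<in> set (cls ! i). t \<noteq> Lit j b)"
    using adjG_A_eq_adjG_C[OF precedes_QD(1)[OF t(1)] i precedes_QD(2,3)[OF t(1)]] t(2) by blast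
  with t(1) show ?thesis
    by blast
qed

lemma satisfiable: "satisfiable k cls"
  unfolding satisfiable_def
proof (intro exI[of _ "\<lambda>j. precedes \<sigma> (Lit j True) Q"] ballI)
  fix c assume "c \<in> set cls"
  then obtain i where i: "i < length cls" "c = cls ! i"
    by (metis in_set_conv_nth)
  then obtain j b where jb: "(j, b) \<in> set c" "precedes \<sigma> (Lit j b) Q"
    using clause_literal_precedes_Q[OF i(1)] by auto
  have "precedes \<sigma> (Lit j True) Q = b"
    using jb(2) not_both_literals_precede_Q[of j] by (cases b) auto
  with jb show "\<exists>(j, b) \<in> set c. precedes \<sigma> (Lit j True) Q = b"
    by blast
qed

end

theorem lemma7:
  fixes k :: nat and cls :: "literal list list"
  assumes "wf_instance k cls"
    and "\<not> satisfiable k cls"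
  shows "\<not> (\<exists>s \<sigma>. is_lbfs (adjG k cls) (verts k cls) s \<sigma> \<and> F_tree (adjG k cls) \<sigma> = treeT k cls)"
proof
  assume "\<exists>s \<sigma>. is_lbfs (adjG k cls) (verts k cls) s \<sigma> \<and> F_tree (adjG k cls) \<sigma> = treeT k cls"
  then obtain s \<sigma> where "lbfs_F_tree k cls s \<sigma>"
    by (auto intro: lbfs_F_tree.intro)
  then have "satisfiable k cls"
    by (rule lbfs_F_tree.satisfiable)
  with assms(2) show False ..
qed

end
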